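(* Let $\Gamma\in(1,2]$ and consider the two-dimensional special relativistic hydrodynamics (RHD) system with ideal-gas equation of state, as described in the context. Let $\bm{U}_{LD},\bm{U}_{RD},\bm{U}_{LU},\bm{U}_{RU}\in\mathcal{G}$ be four admissible states, and let $\bm{F}_{\ast}=\bm{F}(\bm{U}_{\ast})$, $\bm{G}_{\ast}=\bm{G}(\bm{U}_{\ast})$ for $\ast\in\{LD,RD,LU,RU\}$. Define the wave speeds $$S_L=2\min_{\ast}\lambda_A^{(1)}(\bm{U}_{\ast}),\quad S_R=2\max_{\ast}\lambda_A^{(4)}(\bm{U}_{\ast}),\quad S_D=2\min_{\ast}\lambda_B^{(1)}(\bm{U}_{\ast}),\quad S_U=2\max_{\ast}\lambda_B^{(4)}(\bm{U}_{\ast}),$$ the min/max being over $\ast\in\{LD,RD,LU,RU\}$, and assume $S_L<0<S_R$ and $S_D<0<S_U$. Then the intermediate state of the two-dimensional HLL Riemann solver $$\bm{U}^{\ast}=\frac{S_RS_U\bm{U}_{RU}+S_LS_D\bm{U}_{LD}-S_RS_D\bm{U}_{RD}-S_LS_U\bm{U}_{LU}}{(S_R-S_L)(S_U-S_D)}-\frac{S_U(\bm{F}_{RU}-\bm{F}_{LU})-S_D(\bm{F}_{RD}-\bm{F}_{LD})}{(S_R-S_L)(S_U-S_D)}-\frac{S_R(\bm{G}_{RU}-\bm{G}_{RD})-S_L(\bm{G}_{LU}-\bm{G}_{LD})}{(S_R-S_L)(S_U-S_D)}$$ is admissible, i.e. writing $\bm{U}^\ast=(D^\ast,\bm{m}^\ast,E^\ast)^T$,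 one has $D^{\ast}>0$, $E^{\ast}>0$ and $(E^{\ast})^2-(D^{\ast})^2-|\bm{m}^{\ast}|^2>0$.
   Context: Units with speed of light $c=1$. Primitive variables: rest-mass density $\rho$, velocity $\bm{u}=(u,v)$ with $|\bm{u}|<1$, pressure $p$. Lorentz factor $\gamma=1/\sqrt{1-|\bm{u}|^2}$, specific internal energy $e$ with $p=(\Gamma-1)\rho e$, specific enthalpy $h=1+e+p/\rho$, sound speed $c_s=\sqrt{\Gamma p/(\rho h)}$. Conservative variables $\bm{U}=(D,\bm{m},E)^T$ with $D=\rho\gamma$, $\bm{m}=Dh\gamma\bm{u}$, $E=Dh\gamma-p$; fluxes $\bm{F}(\bm{U})=(Du,\ \bm{m}u+p(1,0),\ (E+p)u)^T$ and $\bm{G}(\bm{U})=(Dv,\ \bm{m}v+p(0,1),\ (E+p)v)^T$, the system being $\partial_t\bm{U}+\partial_x\bm{F}+\partial_y\bm{G}=0$. The admissible set is $\mathcal{G}=\{\bm{U}=(D,\bm{m},E)^T: \rho>0,\ p>0,\ |\bm{u}|<1\}$, equivalently $\{D>0,\ E>\sqrt{D^2+|\bm{m}|^2}\}$ (primitive variables are recovered from $\bm{U}\in\mathcal{G}$). For $i=1,2$ (with $u_1=u$, $u_2=v$) the extreme eigenvalues of $\partial\bm{F}_i/\partial\bm{U}$ are $$\lambda_{i}^{(1),(4)}(\bm{U})=\frac{u_i(1-c_s^2)\mp c_s\gamma^{-1}\sqrt{1-u_i^2-c_s^2(|\bm{u}|^2-u_i^2)}}{1-c_s^2|\bm{u}|^2};$$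 $\lambda_A^{(k)}:=\lambda_1^{(k)}$ (the $x$-direction, flux $\bm{F}$) and $\lambda_B^{(k)}:=\lambda_2^{(k)}$ (the $y$-direction, flux $\bm{G}$), $k=1,4$. *)

theory Defs
  imports Complex_Main
begin

(* Primitive variables (rho, u, v, p); conservative vectors (D, m1, m2, E). *)
type_synonym prim = "real \<times> real \<times> real \<times> real"
type_synonym cons = "real \<times> real \<times> real \<times> real"

definition admissible_prim :: "real \<Rightarrow> prim \<Rightarrow> bool" where
  "admissible_prim Gam w = (case w of (rho, u, v, p) \<Rightarrow> rho > 0 \<and> p > 0 \<and> u\<^sup>2 + v\<^sup>2 < 1)"

definition lorentz :: "prim \<Rightarrow> real" where
  "lorentz w = (case w of (rho, u, v, p) \<Rightarrow> 1 / sqrt (1 - (u\<^sup>2 + v\<^sup>2)))"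

definition enthalpy :: "real \<Rightarrow> prim \<Rightarrow> real" where
  "enthalpy Gam w = (case w of (rho, u, v, p) \<Rightarrow>
     (let e = p / ((Gam - 1) * rho) in 1 + e + p / rho))"

definition sound_speed :: "real \<Rightarrow> prim \<Rightarrow> real" where
  "sound_speed Gam w = (case w of (rho, u, v, p) \<Rightarrow> sqrt (Gam * p / (rho * enthalpy Gam w)))"

definition consU :: "real \<Rightarrow> prim \<Rightarrow> cons" where
  "consU Gam w = (case w of (rho, u, v, p) \<Rightarrow>
     (let g = lorentz w; h = enthalpy Gam w; D = rho * g in
      (D, D*h*g*u, D*h*g*v, D*h*g - p)))"

definition fluxF :: "real \<Rightarrow> prim \<Rightarrow> cons" where
  "fluxF Gam w = (case w of (rho, u, v, p) \<Rightarrow>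
     (case consU Gam w of (D, m1, m2, E) \<Rightarrow> (D*u, m1*u + p, m2*u, (E + p)*u)))"

definition fluxG :: "real \<Rightarrow> prim \<Rightarrow> cons" where
  "fluxG Gam w = (case w of (rho, u, v, p) \<Rightarrow>
     (case consU Gam w of (D, m1, m2, E) \<Rightarrow> (D*v, m1*v, m2*v + p, (E + p)*v)))"

(* extreme eigenvalues in direction ui (ui = u for x, ui = v for y); sgn = -1 gives lambda^(1), +1 gives lambda^(4) *)
definition eigval :: "real \<Rightarrow> real \<Rightarrow> prim \<Rightarrow> real \<Rightarrow> real" where
  "eigval Gam s w ui = (case w of (rho, u, v, p) \<Rightarrow>
     (let cs = sound_speed Gam w; g = lorentz w; q = u\<^sup>2 + v\<^sup>2 in
      (ui * (1 - cs\<^sup>2) + s * cs / g * sqrt (1 - ui\<^sup>2 - cs\<^sup>2 * (q - ui\<^sup>2))) / (1 - cs\<^sup>2 * q)))"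

definition lamA1 :: "real \<Rightarrow> prim \<Rightarrow> real" where
  "lamA1 Gam w = eigval Gam (-1) w (fst (snd w))"
definition lamA4 :: "real \<Rightarrow> prim \<Rightarrow> real" where
  "lamA4 Gam w = eigval Gam 1 w (fst (snd w))"
definition lamB1 :: "real \<Rightarrow> prim \<Rightarrow> real" where
  "lamB1 Gam w = eigval Gam (-1) w (fst (snd (snd w)))"
definition lamB4 :: "real \<Rightarrow> prim \<Rightarrow> real" where
  "lamB4 Gam w = eigval Gam 1 w (fst (snd (snd w)))"

definition comp :: "cons \<Rightarrow> nat \<Rightarrow> real" where
  "comp U k = (case U of (D, m1, m2, E) \<Rightarrow>
     (if k = 0 then D else if k = 1 then m1 else if k = 2 then m2 else E))"

definition wave_SL :: "real \<Rightarrow> prim \<Rightarrow> prim \<Rightarrow> prim \<Rightarrow> prim \<Rightarrow> real" where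
  "wave_SL Gam wLD wRD wLU wRU = 2 * Min {lamA1 Gam wLD, lamA1 Gam wRD, lamA1 Gam wLU, lamA1 Gam wRU}"
definition wave_SR :: "real \<Rightarrow> prim \<Rightarrow> prim \<Rightarrow> prim \<Rightarrow> prim \<Rightarrow> real" where
  "wave_SR Gam wLD wRD wLU wRU = 2 * Max {lamA4 Gam wLD, lamA4 Gam wRD, lamA4 Gam wLU, lamA4 Gam wRU}"
definition wave_SD :: "real \<Rightarrow> prim \<Rightarrow> prim \<Rightarrow> prim \<Rightarrow> prim \<Rightarrow> real" where
  "wave_SD Gam wLD wRD wLU wRU = 2 * Min {lamB1 Gam wLD, lamB1 Gam wRD, lamB1 Gam wLU, lamB1 Gam wRU}"
definition wave_SU :: "real \<Rightarrow> prim \<Rightarrow> prim \<Rightarrow> prim \<Rightarrow> prim \<Rightarrow> real" where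
  "wave_SU Gam wLD wRD wLU wRU = 2 * Max {lamB4 Gam wLD, lamB4 Gam wRD, lamB4 Gam wLU, lamB4 Gam wRU}"

definition hll2d :: "real \<Rightarrow> real \<Rightarrow> real \<Rightarrow> real \<Rightarrow> real \<Rightarrow> prim \<Rightarrow> prim \<Rightarrow> prim \<Rightarrow> prim \<Rightarrow> nat \<Rightarrow> real" where
  "hll2d Gam SL SR SD SU wLD wRD wLU wRU k =
     (let U = (\<lambda>w. comp (consU Gam w) k); F = (\<lambda>w. comp (fluxF Gam w) k);
          G = (\<lambda>w. comp (fluxG Gam w) k); den = (SR - SL) * (SU - SD) in
      (SR*SU*U wRU + SL*SD*U wLD - SR*SD*U wRD - SL*SU*U wLU) / den
      - (SU*(F wRU - F wLU) - SD*(F wRD - F wLD)) / den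
      - (SR*(G wRU - G wRD) - SL*(G wLU - G wLD)) / den)"

end

theory Submission
  imports Defs "HOL-Analysis.Product_Vector"
begin

(* The admissible set is the convex cone E > |(D, m)|.  For an admissible state U and a speed
   s >= lambda^(4)(U), the one-dimensional HLL vector s U - F(U) is again admissible: with
   theta = p/rho, e = theta/(Gamma - 1) and q = |u|^2, its Minkowski form satisfies
     c_s^2 (1 - q) (E^2 - D^2 - |m|^2) / rho^2
       = (s - u)^2 (c_s^2 e (e + 2) - theta^2) + theta^2 P(s),
   where P is the characteristic quadratic of the fast eigenvalue, so P(s) >= 0, and the first
   term is positive for an ideal gas with Gamma <= 2.  Reflecting or swapping the velocity
   components gives the same for F(U) - s U with s <= lambda^(1)(U), and for the y-flux.
   Finally, (S_R - S_L)(S_U - S_D) U* is a signed sum of corner terms X Y U - Y F - X G, and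
   each signed corner term is a positive combination of such one-dimensional vectors with the
   speeds X/2 and Y/2. *)

section \<open>The admissible cone\<close>

definition admissible_cons :: "cons \<Rightarrow> bool" where
  "admissible_cons U = (case U of (D, m1, m2, E) \<Rightarrow> 0 < D \<and> norm (D, m1, m2) < E)"

lemma admissible_cons_iff:
  "admissible_cons (D, m1, m2, E) \<longleftrightarrow> 0 < D \<and> 0 < E \<and> D\<^sup>2 + m1\<^sup>2 + m2\<^sup>2 < E\<^sup>2"
proof -
  define x where "x = D\<^sup>2 + m1\<^sup>2 + m2\<^sup>2"
  have x: "0 \<le> x" unfolding x_def by simp
  have "norm (D, m1, m2) = sqrt x" unfolding x_def by (simp add: norm_Pair add.assoc)
  moreover have "sqrt x < E \<longleftrightarrow> 0 < E \<and> x < E\<^sup>2"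
  proof
    assume lt: "sqrt x < E"
    then have "0 < E" using real_sqrt_ge_zero[OF x] by linarith
    moreover have "(sqrt x)\<^sup>2 < E\<^sup>2" using lt real_sqrt_ge_zero[OF x] by (rule power_strict_mono) simp
    ultimately show "0 < E \<and> x < E\<^sup>2" using x by simp
  qed (simp add: real_less_lsqrt)
  ultimately show ?thesis unfolding admissible_cons_def x_def by simp
qed

lemma admissible_cons_add:
  assumes "admissible_cons U" and "admissible_cons V"
  shows "admissible_cons (U + V)"
proof -
  obtain D m1 m2 E D' m1' m2' E' where U: "U = (D, m1, m2, E)" and V: "V = (D', m1', m2', E')"
    by (cases U, cases V) auto
  have "norm (D + D', m1 + m1', m2 + m2') \<le> norm (D, m1, m2) + norm (D', m1', m2')"
    using norm_triangle_ineq[of "(D, m1, m2)" "(D', m1', m2')"] by simp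
  then show ?thesis
    using assms unfolding U V admissible_cons_def by simp
qed

lemma admissible_cons_scaleR:
  assumes "admissible_cons U" and "0 < c"
  shows "admissible_cons (c *\<^sub>R U)"
proof -
  obtain D m1 m2 E where U: "U = (D, m1, m2, E)" by (cases U) auto
  have "norm (c *\<^sub>R (D, m1, m2)) = c * norm (D, m1, m2)"
    using \<open>0 < c\<close> by (simp only: norm_scaleR abs_of_pos)
  then show ?thesis
    using assms unfolding U admissible_cons_def by simp
qed

lemma admissible_cons_uminus_m1:
  "admissible_cons (D, m1, m2, E) \<Longrightarrow> admissible_cons (D, - m1, m2, E)"
  unfolding admissible_cons_iff by simp

lemma admissible_cons_swap_m:
  "admissible_cons (D, m1, m2, E) \<Longrightarrow> admissible_cons (D, m2, m1, E)"
  unfolding admissible_cons_iff by (simp add: add.assoc add.commute)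

section \<open>Sound speed and the fast eigenvalue\<close>

(* This is where Gamma <= 2 is needed: it gives (Gamma - 1) theta <= theta <= e. *)
lemma ideal_gas_sound_speed_bounds:
  fixes Gam \<theta> :: real
  assumes "1 < Gam" and "Gam \<le> 2" and "0 < \<theta>"
  defines "e \<equiv> \<theta> / (Gam - 1)"
  defines "c \<equiv> sqrt (Gam * \<theta> / (1 + e + \<theta>))"
  shows "0 < e" and "0 < c" and "c < 1" and "\<theta>\<^sup>2 < c\<^sup>2 * (e * (e + 2))"
proof -
  have e_ge: "\<theta> \<le> e" and Ge: "Gam * e = e + \<theta>"
    using assms(1-3) unfolding e_def by (auto simp: field_simps)
  show "0 < e" using \<open>0 < \<theta>\<close> e_ge by linarith
  let ?h = "1 + e + \<theta>"
  have h: "0 < ?h" using \<open>0 < \<theta>\<close> e_ge by linarith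
  have c2: "c\<^sup>2 = Gam * \<theta> / ?h"
    using assms(1,3) h unfolding c_def by simp
  show "0 < c" using assms(1,3) h unfolding c_def by simp
  have "(Gam - 1) * \<theta> \<le> \<theta>" using assms(2,3) by (simp add: mult_le_cancel_right1)
  then have "Gam * \<theta> < ?h" using e_ge by (simp add: algebra_simps)
  then show "c < 1" using h unfolding c_def by simp
  have "\<theta> * ?h < Gam * e * (e + 2)"
    unfolding Ge using e_ge \<open>0 < \<theta>\<close> power_mono[OF e_ge, of 2]
    by (simp add: power2_eq_square algebra_simps)
  then have "\<theta> * (\<theta> * ?h) < \<theta> * (Gam * e * (e + 2))"
    using \<open>0 < \<theta>\<close> by (rule mult_strict_left_mono)
  then have "\<theta>\<^sup>2 * ?h < Gam * \<theta> * (e * (e + 2))"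
    by (simp add: power2_eq_square algebra_simps)
  then show "\<theta>\<^sup>2 < c\<^sup>2 * (e * (e + 2))"
    unfolding c2 using h by (simp add: pos_less_divide_eq)
qed

lemma quadratic_nonneg_above_root:
  fixes A b C s x :: real
  assumes "0 < A" and "0 \<le> s" and "s\<^sup>2 = b\<^sup>2 - A * C" and "(b + s) / A \<le> x"
  shows "0 \<le> A * x\<^sup>2 - 2 * b * x + C"
proof -
  have "s \<le> A * x - b" using assms(1,4) by (simp add: field_simps)
  then have "s\<^sup>2 \<le> (A * x - b)\<^sup>2" using \<open>0 \<le> s\<close> by (simp add: power_mono)
  also have "(A * x - b)\<^sup>2 = A * (A * x\<^sup>2 - 2 * b * x + C) + s\<^sup>2"
    using assms(3) by (simp add: power2_eq_square algebra_simps)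
  finally show ?thesis using \<open>0 < A\<close> by (simp add: zero_le_mult_iff)
qed

(* lambda^(4) is the larger root of P x = (1 - c^2)(x - u)^2 - c^2 (1 - |u|^2)(1 - x^2), and
   P u < 0 puts u strictly below it. *)
lemma fast_eigenvalue_le_imp:
  fixes u v c a :: real
  assumes q: "u\<^sup>2 + v\<^sup>2 < 1" and c: "0 < c" "c < 1"
    and a: "(u * (1 - c\<^sup>2) + c * sqrt (1 - (u\<^sup>2 + v\<^sup>2)) * sqrt (1 - u\<^sup>2 - c\<^sup>2 * v\<^sup>2))
              / (1 - c\<^sup>2 * (u\<^sup>2 + v\<^sup>2)) \<le> a"
  shows "u < a" and "c\<^sup>2 * (1 - (u\<^sup>2 + v\<^sup>2)) * (1 - a\<^sup>2) \<le> (1 - c\<^sup>2) * (a - u)\<^sup>2"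
proof -
  define q where "q = u\<^sup>2 + v\<^sup>2"
  have c2: "c\<^sup>2 < 1" using c by (simp add: power_less_one_iff)
  have "c\<^sup>2 * v\<^sup>2 \<le> v\<^sup>2" and "c\<^sup>2 * q \<le> q"
    using c2 unfolding q_def by (simp_all add: mult_left_le_one_le)
  then have A: "0 < 1 - c\<^sup>2 * q" and S: "0 \<le> 1 - u\<^sup>2 - c\<^sup>2 * v\<^sup>2"
    using q unfolding q_def by linarith+
  define s where "s = c * sqrt (1 - q) * sqrt (1 - u\<^sup>2 - c\<^sup>2 * v\<^sup>2)"
  define P where "P x = (1 - c\<^sup>2 * q) * x\<^sup>2 - 2 * (u * (1 - c\<^sup>2)) * x + (u\<^sup>2 * (1 - c\<^sup>2) - c\<^sup>2 * (1 - q))" for x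
  have P_eq: "P x = (1 - c\<^sup>2) * (x - u)\<^sup>2 - c\<^sup>2 * (1 - q) * (1 - x\<^sup>2)" for x
    unfolding P_def q_def by (simp add: power2_eq_square algebra_simps)
  have "0 \<le> s" unfolding s_def q_def using c q S by simp
  moreover have "s\<^sup>2 = (u * (1 - c\<^sup>2))\<^sup>2 - (1 - c\<^sup>2 * q) * (u\<^sup>2 * (1 - c\<^sup>2) - c\<^sup>2 * (1 - q))"
    using q S unfolding s_def q_def by (simp add: power_mult_distrib power2_eq_square algebra_simps)
  ultimately have P_nonneg: "(u * (1 - c\<^sup>2) + s) / (1 - c\<^sup>2 * q) \<le> x \<Longrightarrow> 0 \<le> P x" for x
    unfolding P_def using quadratic_nonneg_above_root[OF A] by blast
  have "u\<^sup>2 < 1" using q zero_le_power2[of v] by linarith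
  then have "P u < 0" unfolding P_eq q_def using c q by simp
  then have "u < (u * (1 - c\<^sup>2) + s) / (1 - c\<^sup>2 * q)" using P_nonneg[of u] by (meson linorder_not_le)
  then show "u < a" using a unfolding s_def q_def by simp
  show "c\<^sup>2 * (1 - (u\<^sup>2 + v\<^sup>2)) * (1 - a\<^sup>2) \<le> (1 - c\<^sup>2) * (a - u)\<^sup>2"
    using P_nonneg[of a] a unfolding P_eq s_def q_def by simp
qed

section \<open>One-dimensional HLL states\<close>

lemma wave_state_minkowski_eq:
  fixes u v g e \<theta> a :: real
  assumes "g\<^sup>2 * (1 - (u\<^sup>2 + v\<^sup>2)) = 1"
  defines "h \<equiv> 1 + e + \<theta>"
  shows "(h * g\<^sup>2 * (a - u) - a * \<theta>)\<^sup>2 - (g * (a - u))\<^sup>2 - (h * g\<^sup>2 * u * (a - u) - \<theta>)\<^sup>2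
           - (h * g\<^sup>2 * v * (a - u))\<^sup>2
         = g\<^sup>2 * (a - u)\<^sup>2 * (e * (e + 2) - \<theta>\<^sup>2) - \<theta>\<^sup>2 * (1 - a\<^sup>2)"
proof -
  have "(h * g\<^sup>2 * (a - u) - a * \<theta>)\<^sup>2 - (g * (a - u))\<^sup>2 - (h * g\<^sup>2 * u * (a - u) - \<theta>)\<^sup>2
          - (h * g\<^sup>2 * v * (a - u))\<^sup>2
        = g\<^sup>2 * (a - u)\<^sup>2 * (e * (e + 2) - \<theta>\<^sup>2) - \<theta>\<^sup>2 * (1 - a\<^sup>2)
          + h\<^sup>2 * g\<^sup>2 * (a - u)\<^sup>2 * (g\<^sup>2 * (1 - (u\<^sup>2 + v\<^sup>2)) - 1)"
    unfolding h_def by (simp add: power2_eq_square algebra_simps)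
  then show ?thesis using assms(1) by simp
qed

lemma pos_if_gt_mult_of_sq_less:
  fixes u m E :: real
  assumes "u * m < E" and "\<bar>u\<bar> \<le> 1" and "m\<^sup>2 < E\<^sup>2"
  shows "0 < E"
proof -
  have "\<bar>m\<bar> < \<bar>E\<bar>" using assms(3) abs_le_square_iff[of E m] by linarith
  moreover have "\<bar>u * m\<bar> \<le> \<bar>m\<bar>" using assms(2) by (simp add: abs_mult mult_left_le_one_le)
  ultimately show ?thesis using assms(1) by linarith
qed

lemma wave_state_admissible:
  fixes u v g c e \<theta> a :: real
  assumes q: "u\<^sup>2 + v\<^sup>2 < 1" and g: "g = 1 / sqrt (1 - (u\<^sup>2 + v\<^sup>2))"
    and c: "0 < c" "c < 1" and \<theta>: "0 < \<theta>" and e: "0 < e" and sound: "\<theta>\<^sup>2 < c\<^sup>2 * (e * (e + 2))"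
    and a: "(u * (1 - c\<^sup>2) + c / g * sqrt (1 - u\<^sup>2 - c\<^sup>2 * v\<^sup>2)) / (1 - c\<^sup>2 * (u\<^sup>2 + v\<^sup>2)) \<le> a"
  defines "h \<equiv> 1 + e + \<theta>"
  shows "admissible_cons (g * (a - u), h * g\<^sup>2 * u * (a - u) - \<theta>, h * g\<^sup>2 * v * (a - u),
                          h * g\<^sup>2 * (a - u) - a * \<theta>)"
proof -
  define q where "q = u\<^sup>2 + v\<^sup>2"
  define d where "d = a - u"
  have "c / g = c * sqrt (1 - q)" unfolding g q_def by simp
  then have d: "0 < d" and P: "c\<^sup>2 * (1 - q) * (1 - a\<^sup>2) \<le> (1 - c\<^sup>2) * d\<^sup>2"
    using fast_eigenvalue_le_imp[OF q c] a unfolding d_def q_def by simp_all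
  have g_pos: "0 < g" and g2: "g\<^sup>2 * (1 - q) = 1"
    using q unfolding g q_def by (simp_all add: power_divide)
  define D m1 m2 E where "D = g * d" and "m1 = h * g\<^sup>2 * u * d - \<theta>"
    and "m2 = h * g\<^sup>2 * v * d" and "E = h * g\<^sup>2 * d - a * \<theta>"
  have Q_eq: "E\<^sup>2 - D\<^sup>2 - m1\<^sup>2 - m2\<^sup>2 = g\<^sup>2 * d\<^sup>2 * (e * (e + 2) - \<theta>\<^sup>2) - \<theta>\<^sup>2 * (1 - a\<^sup>2)"
    unfolding D_def m1_def m2_def E_def d_def h_def by (rule wave_state_minkowski_eq[OF g2[unfolded q_def]])
  have "c\<^sup>2 * (1 - q) * (E\<^sup>2 - D\<^sup>2 - m1\<^sup>2 - m2\<^sup>2)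
      = c\<^sup>2 * (g\<^sup>2 * (1 - q)) * d\<^sup>2 * (e * (e + 2) - \<theta>\<^sup>2) - c\<^sup>2 * (1 - q) * \<theta>\<^sup>2 * (1 - a\<^sup>2)"
    unfolding Q_eq by (simp add: algebra_simps)
  also have "\<dots> = d\<^sup>2 * (c\<^sup>2 * (e * (e + 2)) - \<theta>\<^sup>2) + \<theta>\<^sup>2 * ((1 - c\<^sup>2) * d\<^sup>2 - c\<^sup>2 * (1 - q) * (1 - a\<^sup>2))"
    unfolding g2 by (simp add: algebra_simps)
  also have "\<dots> > 0"
    using d sound P by (simp add: add_pos_nonneg)
  finally have "0 < c\<^sup>2 * (1 - q) * (E\<^sup>2 - D\<^sup>2 - m1\<^sup>2 - m2\<^sup>2)" .
  moreover have "0 < c\<^sup>2 * (1 - q)" using c q unfolding q_def by simp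
  ultimately have Q: "D\<^sup>2 + m1\<^sup>2 + m2\<^sup>2 < E\<^sup>2" by (simp add: zero_less_mult_iff)
  have "g\<^sup>2 * (1 - u\<^sup>2) = 1 + g\<^sup>2 * v\<^sup>2"
    using g2 unfolding q_def by (simp add: algebra_simps)
  then have "h \<le> h * (g\<^sup>2 * (1 - u\<^sup>2))"
    unfolding h_def using e \<theta> by (simp add: mult_le_cancel_left1)
  then have "0 < d * (h * (g\<^sup>2 * (1 - u\<^sup>2)) - \<theta>)" unfolding h_def using d e by simp
  also have "\<dots> = E - u * m1"
    unfolding E_def m1_def d_def by (simp add: power2_eq_square algebra_simps)
  finally have "u * m1 < E" by simp
  moreover have "\<bar>u\<bar> \<le> 1"
    using q zero_le_power2[of v] abs_square_less_1[of u] by linarith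
  moreover have "m1\<^sup>2 < E\<^sup>2" using Q zero_le_power2[of D] zero_le_power2[of m2] by linarith
  ultimately have "0 < E" by (rule pos_if_gt_mult_of_sq_less)
  moreover have "0 < D" unfolding D_def using g_pos d by simp
  ultimately show ?thesis
    using Q unfolding admissible_cons_iff D_def m1_def m2_def E_def d_def by simp
qed

(* n and t are the velocity components normal and tangential to the wave: (n, t) = (+-u, v) and
   (+-v, u) cover the four extreme eigenvalues. *)
lemma ideal_gas_wave_state_admissible:
  fixes Gam \<rho> u v p n t a :: real
  defines "g \<equiv> lorentz (\<rho>, u, v, p)" and "h \<equiv> enthalpy Gam (\<rho>, u, v, p)"
    and "c \<equiv> sound_speed Gam (\<rho>, u, v, p)"
  assumes Gam: "1 < Gam" "Gam \<le> 2" and w: "admissible_prim Gam (\<rho>, u, v, p)"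
    and nt: "n\<^sup>2 + t\<^sup>2 = u\<^sup>2 + v\<^sup>2"
    and a: "(n * (1 - c\<^sup>2) + c / g * sqrt (1 - n\<^sup>2 - c\<^sup>2 * t\<^sup>2)) / (1 - c\<^sup>2 * (u\<^sup>2 + v\<^sup>2)) \<le> a"
  shows "admissible_cons (\<rho> * g * (a - n), \<rho> * h * g\<^sup>2 * n * (a - n) - p, \<rho> * h * g\<^sup>2 * t * (a - n),
                          \<rho> * h * g\<^sup>2 * (a - n) - a * p)"
proof -
  have \<rho>: "0 < \<rho>" and p: "0 < p" and q: "n\<^sup>2 + t\<^sup>2 < 1"
    using w nt unfolding admissible_prim_def by auto
  define \<theta> where "\<theta> = p / \<rho>"
  define e where "e = \<theta> / (Gam - 1)"
  have \<theta>: "0 < \<theta>" unfolding \<theta>_def using \<rho> p by simp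
  have h: "h = 1 + e + \<theta>"
    unfolding h_def e_def \<theta>_def enthalpy_def by (simp add: mult.commute)
  have c: "c = sqrt (Gam * \<theta> / (1 + e + \<theta>))"
    unfolding c_def sound_speed_def h[unfolded h_def] \<theta>_def by (simp add: mult.commute)
  note gas = ideal_gas_sound_speed_bounds[OF Gam \<theta>, folded e_def, folded c]
  have g: "g = 1 / sqrt (1 - (n\<^sup>2 + t\<^sup>2))" unfolding g_def lorentz_def nt by simp
  have a': "(n * (1 - c\<^sup>2) + c / g * sqrt (1 - n\<^sup>2 - c\<^sup>2 * t\<^sup>2)) / (1 - c\<^sup>2 * (n\<^sup>2 + t\<^sup>2)) \<le> a"
    using a unfolding nt .
  have "admissible_cons (g * (a - n), (1 + e + \<theta>) * g\<^sup>2 * n * (a - n) - \<theta>, (1 + e + \<theta>) * g\<^sup>2 * t * (a - n),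
                         (1 + e + \<theta>) * g\<^sup>2 * (a - n) - a * \<theta>)"
    by (rule wave_state_admissible[OF q g gas(2,3) \<theta> gas(1,4) a'])
  then have A: "admissible_cons (\<rho> *\<^sub>R (g * (a - n), h * g\<^sup>2 * n * (a - n) - \<theta>, h * g\<^sup>2 * t * (a - n),
                                 h * g\<^sup>2 * (a - n) - a * \<theta>))"
    unfolding h using \<rho> by (rule admissible_cons_scaleR)
  have eq: "\<rho> *\<^sub>R (g * (a - n), h * g\<^sup>2 * n * (a - n) - \<theta>, h * g\<^sup>2 * t * (a - n), h * g\<^sup>2 * (a - n) - a * \<theta>)
      = (\<rho> * g * (a - n), \<rho> * h * g\<^sup>2 * n * (a - n) - p, \<rho> * h * g\<^sup>2 * t * (a - n),
         \<rho> * h * g\<^sup>2 * (a - n) - a * p)"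
    unfolding \<theta>_def using \<rho> by (simp add: algebra_simps)
  show ?thesis using A unfolding eq .
qed

lemma consU_Pair:
  "consU Gam (\<rho>, u, v, p) = (let g = lorentz (\<rho>, u, v, p); h = enthalpy Gam (\<rho>, u, v, p) in
     (\<rho> * g, \<rho> * h * g\<^sup>2 * u, \<rho> * h * g\<^sup>2 * v, \<rho> * h * g\<^sup>2 - p))"
  by (simp add: consU_def Let_def power2_eq_square)

lemma fluxF_Pair:
  "fluxF Gam (\<rho>, u, v, p) = (let g = lorentz (\<rho>, u, v, p); h = enthalpy Gam (\<rho>, u, v, p) in
     (\<rho> * g * u, \<rho> * h * g\<^sup>2 * u * u + p, \<rho> * h * g\<^sup>2 * v * u, \<rho> * h * g\<^sup>2 * u))"
  by (simp add: fluxF_def consU_def Let_def power2_eq_square)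

lemma fluxG_Pair:
  "fluxG Gam (\<rho>, u, v, p) = (let g = lorentz (\<rho>, u, v, p); h = enthalpy Gam (\<rho>, u, v, p) in
     (\<rho> * g * v, \<rho> * h * g\<^sup>2 * u * v, \<rho> * h * g\<^sup>2 * v * v + p, \<rho> * h * g\<^sup>2 * v))"
  by (simp add: fluxG_def consU_def Let_def power2_eq_square)

lemma admissible_cons_right_x:
  assumes Gam: "1 < Gam" "Gam \<le> 2" and w: "admissible_prim Gam w" and s: "lamA4 Gam w \<le> s"
  shows "admissible_cons (s *\<^sub>R consU Gam w - fluxF Gam w)"
proof -
  obtain \<rho> u v p where w_eq: "w = (\<rho>, u, v, p)" by (cases w) auto
  define g h c where "g = lorentz (\<rho>, u, v, p)" and "h = enthalpy Gam (\<rho>, u, v, p)"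
    and "c = sound_speed Gam (\<rho>, u, v, p)"
  have "(u * (1 - c\<^sup>2) + c / g * sqrt (1 - u\<^sup>2 - c\<^sup>2 * v\<^sup>2)) / (1 - c\<^sup>2 * (u\<^sup>2 + v\<^sup>2)) \<le> s"
    using s unfolding w_eq g_def c_def lamA4_def eigval_def Let_def by simp
  note A = ideal_gas_wave_state_admissible[OF Gam w[unfolded w_eq] refl this[unfolded g_def c_def],
      folded g_def h_def]
  have "s *\<^sub>R consU Gam w - fluxF Gam w
      = (\<rho> * g * (s - u), \<rho> * h * g\<^sup>2 * u * (s - u) - p,
         \<rho> * h * g\<^sup>2 * v * (s - u), \<rho> * h * g\<^sup>2 * (s - u) - s * p)"
    unfolding w_eq consU_Pair fluxF_Pair Let_def g_def h_def by (simp add: algebra_simps)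
  with A show ?thesis by simp
qed

lemma admissible_cons_left_x:
  assumes Gam: "1 < Gam" "Gam \<le> 2" and w: "admissible_prim Gam w" and s: "s \<le> lamA1 Gam w"
  shows "admissible_cons (fluxF Gam w - s *\<^sub>R consU Gam w)"
proof -
  obtain \<rho> u v p where w_eq: "w = (\<rho>, u, v, p)" by (cases w) auto
  define g h c where "g = lorentz (\<rho>, u, v, p)" and "h = enthalpy Gam (\<rho>, u, v, p)"
    and "c = sound_speed Gam (\<rho>, u, v, p)"
  have "s \<le> (u * (1 - c\<^sup>2) - c / g * sqrt (1 - u\<^sup>2 - c\<^sup>2 * v\<^sup>2)) / (1 - c\<^sup>2 * (u\<^sup>2 + v\<^sup>2))"
    using s unfolding w_eq g_def c_def lamA1_def eigval_def Let_def by simp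
  then have "(- u * (1 - c\<^sup>2) + c / g * sqrt (1 - (- u)\<^sup>2 - c\<^sup>2 * v\<^sup>2)) / (1 - c\<^sup>2 * (u\<^sup>2 + v\<^sup>2)) \<le> - s"
    by (simp add: add_divide_distrib diff_divide_distrib)
  note A = ideal_gas_wave_state_admissible[OF Gam w[unfolded w_eq] _ this[unfolded g_def c_def],
      folded g_def h_def, simplified]
  have "fluxF Gam w - s *\<^sub>R consU Gam w
      = (\<rho> * g * (- s - - u), - (\<rho> * h * g\<^sup>2 * - u * (- s - - u) - p),
         \<rho> * h * g\<^sup>2 * v * (- s - - u), \<rho> * h * g\<^sup>2 * (- s - - u) - - s * p)"
    unfolding w_eq consU_Pair fluxF_Pair Let_def g_def h_def by (simp add: algebra_simps)
  then show ?thesis using admissible_cons_uminus_m1[OF A] by simp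
qed

lemma admissible_cons_right_y:
  assumes Gam: "1 < Gam" "Gam \<le> 2" and w: "admissible_prim Gam w" and s: "lamB4 Gam w \<le> s"
  shows "admissible_cons (s *\<^sub>R consU Gam w - fluxG Gam w)"
proof -
  obtain \<rho> u v p where w_eq: "w = (\<rho>, u, v, p)" by (cases w) auto
  define g h c where "g = lorentz (\<rho>, u, v, p)" and "h = enthalpy Gam (\<rho>, u, v, p)"
    and "c = sound_speed Gam (\<rho>, u, v, p)"
  have "(v * (1 - c\<^sup>2) + c / g * sqrt (1 - v\<^sup>2 - c\<^sup>2 * u\<^sup>2)) / (1 - c\<^sup>2 * (u\<^sup>2 + v\<^sup>2)) \<le> s"
    using s unfolding w_eq g_def c_def lamB4_def eigval_def Let_def by simp
  note A = ideal_gas_wave_state_admissible[OF Gam w[unfolded w_eq] add.commute this[unfolded g_def c_def],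
      folded g_def h_def]
  have "s *\<^sub>R consU Gam w - fluxG Gam w
      = (\<rho> * g * (s - v), \<rho> * h * g\<^sup>2 * u * (s - v),
         \<rho> * h * g\<^sup>2 * v * (s - v) - p, \<rho> * h * g\<^sup>2 * (s - v) - s * p)"
    unfolding w_eq consU_Pair fluxG_Pair Let_def g_def h_def by (simp add: algebra_simps)
  then show ?thesis using admissible_cons_swap_m[OF A] by simp
qed

lemma admissible_cons_left_y:
  assumes Gam: "1 < Gam" "Gam \<le> 2" and w: "admissible_prim Gam w" and s: "s \<le> lamB1 Gam w"
  shows "admissible_cons (fluxG Gam w - s *\<^sub>R consU Gam w)"
proof -
  obtain \<rho> u v p where w_eq: "w = (\<rho>, u, v, p)" by (cases w) auto
  define g h c where "g = lorentz (\<rho>, u, v, p)" and "h = enthalpy Gam (\<rho>, u, v, p)"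
    and "c = sound_speed Gam (\<rho>, u, v, p)"
  have "s \<le> (v * (1 - c\<^sup>2) - c / g * sqrt (1 - v\<^sup>2 - c\<^sup>2 * u\<^sup>2)) / (1 - c\<^sup>2 * (u\<^sup>2 + v\<^sup>2))"
    using s unfolding w_eq g_def c_def lamB1_def eigval_def Let_def by simp
  then have "(- v * (1 - c\<^sup>2) + c / g * sqrt (1 - (- v)\<^sup>2 - c\<^sup>2 * u\<^sup>2)) / (1 - c\<^sup>2 * (u\<^sup>2 + v\<^sup>2)) \<le> - s"
    by (simp add: add_divide_distrib diff_divide_distrib)
  note A = ideal_gas_wave_state_admissible[OF Gam w[unfolded w_eq] _ this[unfolded g_def c_def],
      folded g_def h_def, simplified]
  have "fluxG Gam w - s *\<^sub>R consU Gam w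
      = (\<rho> * g * (- s - - v), \<rho> * h * g\<^sup>2 * u * (- s - - v),
         - (\<rho> * h * g\<^sup>2 * - v * (- s - - v) - p), \<rho> * h * g\<^sup>2 * (- s - - v) - - s * p)"
    unfolding w_eq consU_Pair fluxG_Pair Let_def g_def h_def by (simp add: algebra_simps)
  then show ?thesis using admissible_cons_swap_m[OF admissible_cons_uminus_m1[OF A]] by simp
qed

lemma admissible_cons_x_wave:
  assumes Gam: "1 < Gam" "Gam \<le> 2" and w: "admissible_prim Gam w" and "s \<noteq> 0"
    and right: "0 < s \<Longrightarrow> lamA4 Gam w \<le> s" and left: "s < 0 \<Longrightarrow> s \<le> lamA1 Gam w"
  shows "admissible_cons (sgn s *\<^sub>R (s *\<^sub>R consU Gam w - fluxF Gam w))"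
proof (cases "0 < s")
  case True
  then show ?thesis using admissible_cons_right_x[OF Gam w right] by simp
next
  case False
  with \<open>s \<noteq> 0\<close> have "s < 0" by simp
  then show ?thesis using admissible_cons_left_x[OF Gam w left] by simp
qed

lemma admissible_cons_y_wave:
  assumes Gam: "1 < Gam" "Gam \<le> 2" and w: "admissible_prim Gam w" and "s \<noteq> 0"
    and right: "0 < s \<Longrightarrow> lamB4 Gam w \<le> s" and left: "s < 0 \<Longrightarrow> s \<le> lamB1 Gam w"
  shows "admissible_cons (sgn s *\<^sub>R (s *\<^sub>R consU Gam w - fluxG Gam w))"
proof (cases "0 < s")
  case True
  then show ?thesis using admissible_cons_right_y[OF Gam w right] by simp
next
  case False
  with \<open>s \<noteq> 0\<close> have "s < 0" by simp
  then show ?thesis using admissible_cons_left_y[OF Gam w left] by simp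
qed

section \<open>The two-dimensional HLL state\<close>

definition hll2d_corner :: "real \<Rightarrow> prim \<Rightarrow> real \<Rightarrow> real \<Rightarrow> cons" where
  "hll2d_corner Gam w X Y = (X * Y) *\<^sub>R consU Gam w - Y *\<^sub>R fluxF Gam w - X *\<^sub>R fluxG Gam w"

(* sgn (X Y) (X Y U - Y F - X G) = |Y| sgn X (X/2 U - F) + |X| sgn Y (Y/2 U - G): the term X Y U
   is shared evenly between the two directions, which is why the wave speeds carry the factor 2. *)
lemma admissible_cons_hll2d_corner:
  assumes Gam: "1 < Gam" "Gam \<le> 2" and w: "admissible_prim Gam w" and "X \<noteq> 0" "Y \<noteq> 0"
    and "0 < X \<Longrightarrow> lamA4 Gam w \<le> X / 2" and "X < 0 \<Longrightarrow> X / 2 \<le> lamA1 Gam w"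
    and "0 < Y \<Longrightarrow> lamB4 Gam w \<le> Y / 2" and "Y < 0 \<Longrightarrow> Y / 2 \<le> lamB1 Gam w"
  shows "admissible_cons (sgn (X * Y) *\<^sub>R hll2d_corner Gam w X Y)"
proof -
  have x: "admissible_cons (sgn (X / 2) *\<^sub>R ((X / 2) *\<^sub>R consU Gam w - fluxF Gam w))"
    using assms by (intro admissible_cons_x_wave) simp_all
  have y: "admissible_cons (sgn (Y / 2) *\<^sub>R ((Y / 2) *\<^sub>R consU Gam w - fluxG Gam w))"
    using assms by (intro admissible_cons_y_wave) simp_all
  have "sgn (X * Y) *\<^sub>R hll2d_corner Gam w X Y
      = \<bar>Y\<bar> *\<^sub>R (sgn (X / 2) *\<^sub>R ((X / 2) *\<^sub>R consU Gam w - fluxF Gam w))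
        + \<bar>X\<bar> *\<^sub>R (sgn (Y / 2) *\<^sub>R ((Y / 2) *\<^sub>R consU Gam w - fluxG Gam w))"
  proof -
    obtain a b c d where "consU Gam w = (a, b, c, d)" by (cases "consU Gam w") auto
    moreover obtain a' b' c' d' where "fluxF Gam w = (a', b', c', d')" by (cases "fluxF Gam w") auto
    moreover obtain a'' b'' c'' d'' where "fluxG Gam w = (a'', b'', c'', d'')" by (cases "fluxG Gam w") auto
    ultimately show ?thesis unfolding hll2d_corner_def abs_sgn sgn_mult by (simp add: field_simps)
  qed
  then show ?thesis
    using admissible_cons_add[OF admissible_cons_scaleR[OF x] admissible_cons_scaleR[OF y]] assms
    by simp
qed

lemma comp_eq_fst_snd:
  "comp U 0 = fst U" "comp U 1 = fst (snd U)" "comp U 2 = fst (snd (snd U))" "comp U 3 = snd (snd (snd U))"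
  by (simp_all add: comp_def split: prod.split)

lemma hll2d_eq_corners:
  "(hll2d Gam SL SR SD SU wLD wRD wLU wRU 0, hll2d Gam SL SR SD SU wLD wRD wLU wRU 1,
    hll2d Gam SL SR SD SU wLD wRD wLU wRU 2, hll2d Gam SL SR SD SU wLD wRD wLU wRU 3)
   = (1 / ((SR - SL) * (SU - SD))) *\<^sub>R
       (hll2d_corner Gam wRU SR SU + hll2d_corner Gam wLD SL SD
        - hll2d_corner Gam wRD SR SD - hll2d_corner Gam wLU SL SU)"
  unfolding hll2d_def hll2d_corner_def Let_def comp_eq_fst_snd
  by (simp add: prod_eq_iff diff_divide_distrib add_divide_distrib algebra_simps)

lemma admissible_cons_hll2d:
  assumes Gam: "1 < Gam" "Gam \<le> 2"
    and adm: "admissible_prim Gam wLD" "admissible_prim Gam wRD"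
      "admissible_prim Gam wLU" "admissible_prim Gam wRU"
    and speeds: "SL < 0" "0 < SR" "SD < 0" "0 < SU"
    and bounds: "\<And>w. w \<in> {wLD, wRD, wLU, wRU} \<Longrightarrow>
      SL / 2 \<le> lamA1 Gam w \<and> lamA4 Gam w \<le> SR / 2 \<and> SD / 2 \<le> lamB1 Gam w \<and> lamB4 Gam w \<le> SU / 2"
  shows "admissible_cons (hll2d Gam SL SR SD SU wLD wRD wLU wRU 0, hll2d Gam SL SR SD SU wLD wRD wLU wRU 1,
                          hll2d Gam SL SR SD SU wLD wRD wLU wRU 2, hll2d Gam SL SR SD SU wLD wRD wLU wRU 3)"
proof -
  note corner = admissible_cons_hll2d_corner[OF Gam]
  have "admissible_cons (hll2d_corner Gam wRU SR SU)"
    using corner[OF adm(4), of SR SU] speeds bounds[of wRU] by (simp add: sgn_mult)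
  moreover have "admissible_cons (hll2d_corner Gam wLD SL SD)"
    using corner[OF adm(1), of SL SD] speeds bounds[of wLD] by (simp add: sgn_mult)
  moreover have "admissible_cons (- hll2d_corner Gam wRD SR SD)"
    using corner[OF adm(2), of SR SD] speeds bounds[of wRD] by (simp add: sgn_mult)
  moreover have "admissible_cons (- hll2d_corner Gam wLU SL SU)"
    using corner[OF adm(3), of SL SU] speeds bounds[of wLU] by (simp add: sgn_mult)
  ultimately have "admissible_cons (hll2d_corner Gam wRU SR SU + hll2d_corner Gam wLD SL SD
      - hll2d_corner Gam wRD SR SD - hll2d_corner Gam wLU SL SU)"
    unfolding diff_conv_add_uminus by (intro admissible_cons_add)
  then show ?thesis
    unfolding hll2d_eq_corners using speeds by (simp add: admissible_cons_scaleR)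
qed

theorem theorem1:
  fixes Gam :: real and wLD wRD wLU wRU :: prim
  assumes "1 < Gam" and "Gam \<le> 2"
    and "admissible_prim Gam wLD" and "admissible_prim Gam wRD"
    and "admissible_prim Gam wLU" and "admissible_prim Gam wRU"
    and "wave_SL Gam wLD wRD wLU wRU < 0" and "0 < wave_SR Gam wLD wRD wLU wRU"
    and "wave_SD Gam wLD wRD wLU wRU < 0" and "0 < wave_SU Gam wLD wRD wLU wRU"
  shows "let SL = wave_SL Gam wLD wRD wLU wRU; SR = wave_SR Gam wLD wRD wLU wRU;
             SD = wave_SD Gam wLD wRD wLU wRU; SU = wave_SU Gam wLD wRD wLU wRU;
             Ust = hll2d Gam SL SR SD SU wLD wRD wLU wRU
         in Ust 0 > 0 \<and> Ust 3 > 0 \<and> (Ust 3)\<^sup>2 - (Ust 0)\<^sup>2 - ((Ust 1)\<^sup>2 + (Ust 2)\<^sup>2) > 0"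
proof -
  have "wave_SL Gam wLD wRD wLU wRU / 2 \<le> lamA1 Gam w \<and> lamA4 Gam w \<le> wave_SR Gam wLD wRD wLU wRU / 2
      \<and> wave_SD Gam wLD wRD wLU wRU / 2 \<le> lamB1 Gam w \<and> lamB4 Gam w \<le> wave_SU Gam wLD wRD wLU wRU / 2"
    if "w \<in> {wLD, wRD, wLU, wRU}" for w
    using that unfolding wave_SL_def wave_SR_def wave_SD_def wave_SU_def by auto
  from admissible_cons_hll2d[OF assms this] show ?thesis
    unfolding Let_def admissible_cons_iff by (simp add: add.assoc)
qed

end
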